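(* Suppose that $\mathbb{E}\big[\int_{\mathbb{R}}|g^{(k)}(-s)\sigma_s|^\beta\mathbf 1_{(-\infty,-\delta]}(s)\,ds\big]<\infty$, and assume that $\alpha+1/\beta<k$. For $\varepsilon>0$ with $\varepsilon\le\delta$ there is a constant $C>0$ such that $$\mathbb{E}\Big[\int_{\frac in-\varepsilon}^{\frac in}|g_{i,n}(s)\sigma_{s-}|^\beta ds\Big]+\int_{\frac in-\varepsilon}^{\frac in}|g_{i,n}(s)|^\beta ds\le Cn^{-\alpha\beta-1},$$ $$\mathbb{E}\Big[\int_{-\infty}^{\frac in-\varepsilon}|g_{i,n}(s)\sigma_{s-}|^\beta ds\Big]+\int_{-\infty}^{\frac in-\varepsilon}|g_{i,n}(s)|^\beta ds\le Cn^{-k\beta},$$ for all $i\in\{k,\dots,n\}$.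
   Context: $L$ is a symmetric $\beta$-stable Lévy process, $\beta\in(0,2)$; $\sigma$ is a càdlàg adapted process, uniformly bounded on $[-\delta,\infty)$ by a deterministic constant. $g:\mathbb{R}\to\mathbb{R}$ vanishes on $(-\infty,0)$ and satisfies $g(t)\sim c_0t^\alpha$ as $t\downarrow0$ ($\alpha>0$, $c_0\ne0$), is $k$-times continuously differentiable on $(0,\infty)$, and for some $\delta>0$ satisfies $|g^{(k)}(t)|\le Ct^{\alpha-k}$ on $(0,\delta)$, with $|g'|,|g^{(k)}|\in L^\beta((\delta,\infty))$ and decreasing on $(\delta,\infty)$ (and $g-g_0$ bounded in $L^\beta(\mathbb{R}_+)$ for the accompanying $g_0$). Here $g_{i,n}(s)=\sum_{j=0}^k(-1)^j\binom kj g((i-j)/n-s)$. *)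

theory Defs
  imports "HOL-Probability.Probability" "HOL-Library.Landau_Symbols"
begin

definition g_in :: "(real \<Rightarrow> real) \<Rightarrow> nat \<Rightarrow> nat \<Rightarrow> nat \<Rightarrow> real \<Rightarrow> real" where
  "g_in g k i n s = (\<Sum>j = 0..k. (-1) ^ j * real (k choose j) * g ((real i - real j) / real n - s))"

definition left_lim :: "(real \<Rightarrow> real) \<Rightarrow> real \<Rightarrow> real" where
  "left_lim f s = Lim (at_left s) f"

definition cadlag :: "(real \<Rightarrow> real) \<Rightarrow> bool" where
  "cadlag f \<longleftrightarrow> (\<forall>t. continuous (at_right t) f \<and> (\<exists>l. (f \<longlongrightarrow> l) (at_left t)))"

end

theory Submission
  imports Defs
begin

text \<open>Write \<open>x = i/n - s\<close>. Then \<open>g_in g k i n s\<close> is the \<open>k\<close>-th forward difference of \<open>g\<close> with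
  step \<open>1/n\<close> ending at \<open>x\<close>. For \<open>x \<le> 2k/n\<close> each of its \<open>k + 1\<close> terms is \<open>O(n^(-\<alpha>))\<close>
  because \<open>g t \<sim> c0 t^\<alpha>\<close>; for \<open>2k/n \<le> x \<le> \<delta>\<close> the mean value theorem bounds it by
  \<open>n^(-k) sup |g^(k)| \<le> C n^(-k) x^(\<alpha>-k)\<close>. As \<open>(\<alpha> - k)\<beta> < -1\<close>, integrating the \<open>\<beta>\<close>-th power
  over \<open>x \<ge> 2k/n\<close> gives \<open>n^(-k\<beta>) (1/n)^((\<alpha>-k)\<beta>+1) = n^(-\<alpha>\<beta>-1)\<close>, the order of the plateau.
  Left of the window the mean value bound gives \<open>n^(-k)\<close> times a bound of \<open>g^(k)\<close> on a compact
  set, and for \<open>s < -\<delta>\<close> times the monotone tail \<open>|g^(k)(-s)|\<close>, which against \<open>\<sigma>\<close> is the assumed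
  moment. Otherwise \<open>\<sigma>\<close> only enters through its bound on \<open>[-\<delta>, \<infinity>)\<close>; as a cadlag path has
  countably many jumps, \<open>\<sigma>\<^sub>s\<^sub>-\<close> may be replaced by \<open>\<sigma>\<^sub>s\<close> under the Lebesgue integral.\<close>

section \<open>Finite differences\<close>

definition fwd_diff :: "nat \<Rightarrow> (nat \<Rightarrow> real) \<Rightarrow> real" where
  "fwd_diff m a = (\<Sum>t=0..m. (-1)^(m-t) * real (m choose t) * a t)"

lemma fwd_diff_Suc: "fwd_diff (Suc m) a = fwd_diff m (\<lambda>t. a (Suc t) - a t)"
proof -
  have lower: "(\<Sum>t=0..Suc m. (-1)^(Suc m-t) * real (m choose t) * a t)
      = - (\<Sum>t=0..m. (-1)^(m-t) * real (m choose t) * a t)"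
    by (auto simp add: sum_negf[symmetric] Suc_diff_le intro!: sum.cong)
  have upper: "(\<Sum>t=0..Suc m. (-1)^(Suc m-t) * real (if t = 0 then 0 else m choose (t - 1)) * a t)
      = (\<Sum>t=0..m. (-1)^(m-t) * real (m choose t) * a (Suc t))"
    by (subst sum.atLeast0_atMost_Suc_shift) simp
  have "fwd_diff (Suc m) a = (\<Sum>t=0..Suc m. (-1)^(Suc m-t)
      * (real (m choose t) + real (if t = 0 then 0 else m choose (t - 1))) * a t)"
    unfolding fwd_diff_def
    by (intro sum.cong refl) (auto simp: choose_reduce_nat[of "Suc m"] not0_implies_Suc)
  also have "\<dots> = (\<Sum>t=0..Suc m. (-1)^(Suc m-t) * real (m choose t) * a t)
      + (\<Sum>t=0..Suc m. (-1)^(Suc m-t) * real (if t = 0 then 0 else m choose (t - 1)) * a t)"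
    by (simp add: algebra_simps sum.distrib)
  also have "\<dots> = fwd_diff m (\<lambda>t. a (Suc t) - a t)"
    unfolding lower upper fwd_diff_def by (simp add: algebra_simps sum_subtractf)
  finally show ?thesis .
qed

lemma abs_fwd_diff_le:
  fixes f :: "nat \<Rightarrow> real \<Rightarrow> real"
  assumes "h \<ge> 0"
    and "\<And>j y. j < m \<Longrightarrow> x \<le> y \<Longrightarrow> y \<le> x + real m * h \<Longrightarrow> (f j has_real_derivative f (Suc j) y) (at y)"
    and "\<And>y. x \<le> y \<Longrightarrow> y \<le> x + real m * h \<Longrightarrow> \<bar>f m y\<bar> \<le> B"
  shows "\<bar>fwd_diff m (\<lambda>t. f 0 (x + real t * h))\<bar> \<le> h^m * B"
  using assms(2,3)
proof (induction m arbitrary: f B)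
  case 0
  then show ?case by (simp add: fwd_diff_def)
next
  case (Suc m)
  define F where "F = (\<lambda>j y. f j (y + h) - f j y)"
  have derF: "(F j has_real_derivative F (Suc j) y) (at y)"
    if "j < m" "x \<le> y" "y \<le> x + real m * h" for j y
  proof -
    have "((\<lambda>y. f j (y + h)) has_real_derivative f (Suc j) (y + h)) (at y)"
      using that \<open>h \<ge> 0\<close> by (subst DERIV_shift [symmetric]) (auto intro!: Suc.prems(1) simp: algebra_simps)
    moreover have "(f j has_real_derivative f (Suc j) y) (at y)"
      using that \<open>h \<ge> 0\<close> by (intro Suc.prems(1)) (auto simp: algebra_simps)
    ultimately show ?thesis unfolding F_def by (rule DERIV_diff)
  qed
  have boundF: "\<bar>F m y\<bar> \<le> h * B" if "x \<le> y" "y \<le> x + real m * h" for y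
  proof (cases "h = 0")
    case True then show ?thesis by (simp add: F_def)
  next
    case False
    with \<open>h \<ge> 0\<close> have "h > 0" by simp
    have "\<exists>z. y < z \<and> z < y + h \<and> f m (y + h) - f m y = (y + h - y) * f (Suc m) z"
      using \<open>h > 0\<close> that by (intro MVT2) (auto intro!: Suc.prems(1) simp: algebra_simps)
    then obtain z where z: "y < z" "z < y + h" "f m (y + h) - f m y = h * f (Suc m) z" by auto
    moreover have "\<bar>f (Suc m) z\<bar> \<le> B" using z that by (intro Suc.prems(2)) (auto simp: algebra_simps)
    ultimately show ?thesis using \<open>h > 0\<close> by (simp add: F_def abs_mult mult_left_mono)
  qed
  have "fwd_diff (Suc m) (\<lambda>t. f 0 (x + real t * h)) = fwd_diff m (\<lambda>t. F 0 (x + real t * h))"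
    unfolding fwd_diff_Suc F_def by (simp add: algebra_simps)
  also have "\<bar>\<dots>\<bar> \<le> h^m * (h * B)"
    by (rule Suc.IH) (auto intro: derF boundF)
  finally show ?case by (simp add: algebra_simps)
qed

lemma g_in_eq_fwd_diff:
  assumes "k \<le> i"
  shows "g_in g k i n s = fwd_diff k (\<lambda>t. g ((real i - real k) / real n - s + real t * (1 / real n)))"
proof -
  have "g_in g k i n s = (\<Sum>t=0..k. (-1) ^ (k - t) * real (k choose (k - t))
      * g ((real i - real (k - t)) / real n - s))"
    unfolding g_in_def by (subst sum.atLeastAtMost_rev) simp
  also have "\<dots> = fwd_diff k (\<lambda>t. g ((real i - real k) / real n - s + real t * (1 / real n)))"
    unfolding fwd_diff_def
    by (intro sum.cong refl)
      (auto simp: binomial_symmetric[symmetric] diff_divide_distrib add_divide_distrib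
        intro!: arg_cong[where f=g])
  finally show ?thesis .
qed

lemma abs_g_in_le:
  assumes "\<And>j. j \<le> k \<Longrightarrow> \<bar>g ((real i - real j) / real n - s)\<bar> \<le> B"
  shows "\<bar>g_in g k i n s\<bar> \<le> 2^k * B"
proof -
  have "\<bar>g_in g k i n s\<bar> \<le> (\<Sum>j=0..k. \<bar>(-1) ^ j * real (k choose j) * g ((real i - real j) / real n - s)\<bar>)"
    unfolding g_in_def by (rule sum_abs)
  also have "\<dots> \<le> (\<Sum>j=0..k. real (k choose j) * B)"
    using assms by (intro sum_mono) (simp add: abs_mult mult_left_mono)
  also have "\<dots> = 2^k * B"
    using choose_row_sum[of k]
    by (simp add: sum_distrib_right[symmetric] atLeast0AtMost flip: of_nat_sum)
  finally show ?thesis .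
qed

lemma abs_g_in_le_deriv_bound:
  assumes "k \<le> i" "n > 0"
    and "\<And>j t. j < k \<Longrightarrow> t > 0 \<Longrightarrow> ((deriv ^^ j) g has_real_derivative (deriv ^^ Suc j) g t) (at t)"
    and "(real i - real k) / real n - s > 0"
    and "\<And>y. (real i - real k) / real n - s \<le> y \<Longrightarrow> y \<le> real i / real n - s \<Longrightarrow> \<bar>(deriv ^^ k) g y\<bar> \<le> B"
  shows "\<bar>g_in g k i n s\<bar> \<le> real n powr (- real k) * B"
proof -
  have end_point: "(real i - real k) / real n - s + real k / real n = real i / real n - s"
    by (simp add: diff_divide_distrib)
  have "\<bar>fwd_diff k (\<lambda>t. (deriv ^^ 0) g ((real i - real k) / real n - s + real t * (1 / real n)))\<bar>
      \<le> (1 / real n)^k * B"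
    using assms(3-5) by (intro abs_fwd_diff_le) (auto simp: end_point)
  then show ?thesis
    using g_in_eq_fwd_diff[OF assms(1), of g n s] \<open>n > 0\<close>
    by (simp add: powr_minus_divide powr_realpow power_one_over)
qed

section \<open>Paths with left limits\<close>

lemma cadlag_tendsto_left_lim:
  assumes "cadlag f"
  shows "(f \<longlongrightarrow> left_lim f t) (at_left t)"
proof -
  from assms obtain l where l: "(f \<longlongrightarrow> l) (at_left t)" unfolding cadlag_def by blast
  then have "left_lim f t = l" unfolding left_lim_def by (intro tendsto_Lim) auto
  with l show ?thesis by simp
qed

lemma cadlag_abs_left_lim_le:
  assumes "cadlag f" "\<And>u. u \<ge> a \<Longrightarrow> \<bar>f u\<bar> \<le> K" "a < t"
  shows "\<bar>left_lim f t\<bar> \<le> K"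
proof (rule tendsto_upperbound[OF tendsto_rabs[OF cadlag_tendsto_left_lim[OF assms(1)]]])
  show "\<forall>\<^sub>F u in at_left t. \<bar>f u\<bar> \<le> K"
    unfolding eventually_at_left_field using assms(2,3) by (intro exI[of _ a]) auto
qed simp

text \<open>Each jump time \<open>t\<close> is tagged with rationals \<open>p < t < q\<close> and \<open>r\<close> such that \<open>f\<close> stays
  \<open>r\<close>-close to its left limit on \<open>(p, t)\<close> and to \<open>f t\<close> on \<open>[t, q)\<close>, while the jump exceeds
  \<open>3 r\<close>; two jump times with the same tag would force a jump of at most \<open>3 r\<close>.\<close>
lemma cadlag_countable_jumps:
  assumes "cadlag f"
  shows "countable {t. left_lim f t \<noteq> f t}"
proof -
  let ?S = "{t. left_lim f t \<noteq> f t}"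
  define tag where "tag t x \<longleftrightarrow> (case x of (p, q, r) \<Rightarrow> p < t \<and> t < q \<and> 0 < r
     \<and> 3 * r < \<bar>left_lim f t - f t\<bar> \<and> (\<forall>u\<in>{p<..<t}. \<bar>f u - left_lim f t\<bar> < r)
     \<and> (\<forall>u\<in>{t..<q}. \<bar>f u - f t\<bar> < r))" for t x
  have "\<exists>x \<in> \<rat> \<times> \<rat> \<times> \<rat>. tag t x" if jump: "t \<in> ?S" for t
  proof -
    obtain r where r: "r \<in> \<rat>" "0 < r" "r < \<bar>left_lim f t - f t\<bar> / 3"
      using Rats_dense_in_real[of 0 "\<bar>left_lim f t - f t\<bar> / 3"] jump
      by auto
    have "\<forall>\<^sub>F u in at_left t. dist (f u) (left_lim f t) < r"
      using cadlag_tendsto_left_lim[OF assms] r(2) by (rule tendstoD)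
    then obtain b where b: "b < t" "\<forall>u>b. u < t \<longrightarrow> dist (f u) (left_lim f t) < r"
      unfolding eventually_at_left_field by blast
    obtain p where p: "p \<in> \<rat>" "b < p" "p < t" using Rats_dense_in_real[OF b(1)] by auto
    have "(f \<longlongrightarrow> f t) (at_right t)"
      using assms unfolding cadlag_def continuous_within by auto
    then have "\<forall>\<^sub>F u in at_right t. dist (f u) (f t) < r"
      using r(2) by (rule tendstoD)
    then obtain c where c: "t < c" "\<forall>u>t. u < c \<longrightarrow> dist (f u) (f t) < r"
      unfolding eventually_at_right_field by blast
    obtain q where q: "q \<in> \<rat>" "t < q" "q < c" using Rats_dense_in_real[OF c(1)] by auto
    have "tag t (p, q, r)"
      unfolding tag_def using p q r b c
      by (auto simp: dist_real_def le_less)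
    with p q r show ?thesis by blast
  qed
  then obtain \<phi> where \<phi>: "\<And>t. t \<in> ?S \<Longrightarrow> \<phi> t \<in> \<rat> \<times> \<rat> \<times> \<rat> \<and> tag t (\<phi> t)"
    by metis
  have no_shared_tag: False if "t \<in> ?S" "t' \<in> ?S" "t < t'" "\<phi> t = \<phi> t'" for t t'
  proof -
    obtain p q r where pqr: "\<phi> t = (p, q, r)" by (cases "\<phi> t") auto
    have at_t: "tag t (p, q, r)" and at_t': "tag t' (p, q, r)"
      using \<phi> that pqr by metis+
    define u where "u = (t + t') / 2"
    have "t < u" "u < t'" using \<open>t < t'\<close> by (auto simp: u_def)
    with at_t at_t' have "\<bar>f u - f t\<bar> < r" "\<bar>f u - left_lim f t'\<bar> < r" "\<bar>f t' - f t\<bar> < r"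
      "3 * r < \<bar>left_lim f t' - f t'\<bar>"
      unfolding tag_def by auto
    then show False by linarith
  qed
  have "inj_on \<phi> ?S"
    by (intro inj_onI) (metis no_shared_tag linorder_neqE_linordered_idom)
  moreover have "\<phi> ` ?S \<subseteq> \<rat> \<times> \<rat> \<times> \<rat>" using \<phi> by blast
  then have "countable (\<phi> ` ?S)"
    by (rule countable_subset) (intro countable_SIGMA countable_rat)
  ultimately show ?thesis by (rule countable_image_inj_on[rotated])
qed

lemma AE_left_lim_eq:
  assumes "cadlag f"
  shows "AE t in lborel. left_lim f t = f t"
  using AE_not_in[OF countable_imp_null_set_lborel[OF cadlag_countable_jumps[OF assms]]] by auto

lemma cadlag_process_measurable:
  fixes \<sigma> :: "real \<Rightarrow> 'w \<Rightarrow> real"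
  assumes meas: "\<And>t. \<sigma> t \<in> borel_measurable M"
    and cad: "\<And>\<omega>. \<omega> \<in> space M \<Longrightarrow> cadlag (\<lambda>t. \<sigma> t \<omega>)"
  shows "(\<lambda>x. \<sigma> (snd x) (fst x)) \<in> borel_measurable (M \<Otimes>\<^sub>M (lborel :: real measure))"
proof (rule borel_measurable_LIMSEQ_real)
  \<comment> \<open>right continuity: approximate \<open>t\<close> from the right by the grid \<open>\<lceil>m t\<rceil> / m\<close>\<close>
  fix m :: nat
  show "(\<lambda>x. \<sigma> (real_of_int \<lceil>real (Suc m) * snd x\<rceil> / real (Suc m)) (fst x))
      \<in> borel_measurable (M \<Otimes>\<^sub>M lborel)"
  proof (rule measurable_compose_countable[where f = "\<lambda>i x. \<sigma> (real_of_int i / real (Suc m)) (fst x)"])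
    fix i :: int
    show "(\<lambda>x. \<sigma> (real_of_int i / real (Suc m)) (fst x)) \<in> borel_measurable (M \<Otimes>\<^sub>M lborel)"
      using measurable_compose[OF measurable_fst meas] by simp
  next
    have "(\<lambda>x. real (Suc m) * snd x) \<in> borel_measurable (M \<Otimes>\<^sub>M lborel)"
      by (intro borel_measurable_times borel_measurable_const)
         (simp add: measurable_snd'' measurable_ident_sets)
    from measurable_compose[OF this measurable_real_ceiling]
    show "(\<lambda>x. \<lceil>real (Suc m) * snd x\<rceil>) \<in> measurable (M \<Otimes>\<^sub>M lborel) (count_space UNIV)"
      by simp
  qed
next
  fix x :: "'w \<times> real" assume "x \<in> space (M \<Otimes>\<^sub>M lborel)"
  then have "cadlag (\<lambda>t. \<sigma> t (fst x))" by (intro cad) (auto simp: space_pair_measure)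
  then have cont: "continuous (at (snd x) within {snd x..}) (\<lambda>t. \<sigma> t (fst x))"
    by (simp add: cadlag_def at_within_Ici_at_right)
  let ?y = "\<lambda>m::nat. real_of_int \<lceil>real (Suc m) * snd x\<rceil> / real (Suc m)"
  have lower: "snd x \<le> ?y m" for m
    by (simp add: field_simps)
  have upper: "?y m \<le> snd x + 1 / real (Suc m)" for m
  proof -
    have "real_of_int \<lceil>real (Suc m) * snd x\<rceil> \<le> real (Suc m) * snd x + 1"
      by linarith
    then have "?y m \<le> (real (Suc m) * snd x + 1) / real (Suc m)"
      by (intro divide_right_mono) auto
    then show ?thesis by (simp add: add_divide_distrib)
  qed
  have "(\<lambda>m. snd x + 1 / real (Suc m)) \<longlonglongrightarrow> snd x + 0"
    by (intro tendsto_add tendsto_const LIMSEQ_Suc[OF lim_const_over_n])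
  then have upper_lim: "(\<lambda>m. snd x + 1 / real (Suc m)) \<longlonglongrightarrow> snd x" by simp
  have y_lim: "?y \<longlonglongrightarrow> snd x"
    by (rule tendsto_sandwich[OF always_eventually always_eventually tendsto_const upper_lim])
      (use lower upper in blast)+
  show "(\<lambda>m. \<sigma> (?y m) (fst x)) \<longlonglongrightarrow> \<sigma> (snd x) (fst x)"
    by (rule continuous_within_tendsto_compose'[OF cont _ y_lim]) (use lower in auto)
qed

section \<open>Power bounds and integrals\<close>

lemma eventually_powr_bound_imp_bound_on_Ioc:
  fixes f :: "real \<Rightarrow> real"
  assumes "\<forall>\<^sub>F t in at_right 0. \<bar>f t\<bar> \<le> c * t powr a" "continuous_on {0<..R} f" "R > 0"
  shows "\<exists>C>0. \<forall>t\<in>{0<..R}. \<bar>f t\<bar> \<le> C * t powr a"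
proof -
  obtain \<eta> where \<eta>: "\<eta> > 0" "\<And>t. 0 < t \<Longrightarrow> t < \<eta> \<Longrightarrow> \<bar>f t\<bar> \<le> c * t powr a"
    using assms(1) unfolding eventually_at_right_field by auto
  have "{\<eta>/2..R} \<subseteq> {0<..R}" using \<eta>(1) by auto
  from continuous_on_compact_bound[OF compact_Icc continuous_on_subset[OF assms(2) this]]
  obtain B where B: "\<And>t. t \<in> {\<eta>/2..R} \<Longrightarrow> \<bar>f t\<bar> \<le> B"
    by auto
  define m where "m = min ((\<eta>/2) powr a) (R powr a)"
  have m_le: "m \<le> t powr a" if "t \<in> {\<eta>/2..R}" for t
  proof (cases "a \<ge> 0")
    case True
    then have "(\<eta>/2) powr a \<le> t powr a" using that \<eta>(1) by (intro powr_mono2) auto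
    then show ?thesis by (simp add: m_def)
  next
    case False
    then have "R powr a \<le> t powr a" using that \<eta>(1) by (intro powr_mono2') auto
    then show ?thesis by (simp add: m_def)
  qed
  have "m > 0" using \<eta>(1) \<open>R > 0\<close> by (simp add: m_def)
  define C where "C = max c 0 + max B 0 / m + 1"
  have "0 \<le> max B 0 / m" using \<open>m > 0\<close> by simp
  then have C_ge: "c \<le> C" "max B 0 / m \<le> C" by (auto simp: C_def max_def)
  have "\<bar>f t\<bar> \<le> C * t powr a" if t: "t \<in> {0<..R}" for t
  proof (cases "t < \<eta>/2")
    case True
    then have "\<bar>f t\<bar> \<le> c * t powr a" using \<eta> t by auto
    also have "\<dots> \<le> C * t powr a"
      using C_ge by (intro mult_right_mono) auto
    finally show ?thesis .
  next
    case False
    with t have "\<bar>f t\<bar> \<le> B" by (intro B) auto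
    also have "\<dots> \<le> max B 0" by simp
    also have "\<dots> = max B 0 / m * m" using \<open>m > 0\<close> by simp
    also have "\<dots> \<le> max B 0 / m * t powr a"
      using False t m_le \<open>m > 0\<close> by (intro mult_left_mono) auto
    also have "\<dots> \<le> C * t powr a"
      using C_ge by (intro mult_right_mono) auto
    finally show ?thesis .
  qed
  moreover have "C > 0" using \<open>0 \<le> max B 0 / m\<close> by (simp add: C_def add_nonneg_pos)
  ultimately show ?thesis by blast
qed

lemma nn_integral_lborel_reflect:
  fixes f :: "real \<Rightarrow> ennreal"
  assumes "f \<in> borel_measurable borel"
  shows "(\<integral>\<^sup>+ s. f (c - s) \<partial>lborel) = (\<integral>\<^sup>+ x. f x \<partial>lborel)"
  using nn_integral_real_affine[of f "-1" c] assms by simp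

lemma nn_integral_plateau_powr_tail:
  fixes a Z1 Z2 p :: real
  assumes "a > 0" "Z1 \<ge> 0" "Z2 \<ge> 0" "p < -1"
  shows "(\<integral>\<^sup>+ x. ennreal Z1 * indicator {0..a} x + ennreal (Z2 * x powr p) * indicator {a..} x \<partial>lborel)
    = ennreal (Z1 * a + Z2 * (- (a powr (p + 1)) / (p + 1)))"
proof -
  have int: "((\<lambda>x. Z2 * x powr p) has_integral (Z2 * (- (a powr (p + 1)) / (p + 1)))) {a..}"
    using assms by (intro has_integral_mult_right has_integral_powr_to_inf)
  have tail: "(\<integral>\<^sup>+ x. ennreal (Z2 * x powr p) * indicator {a..} x \<partial>lborel)
      = ennreal (Z2 * (- (a powr (p + 1)) / (p + 1)))"
    by (rule nn_integral_has_integral_lebesgue'[OF _ int]) (use assms in simp)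
  have "a powr (p + 1) / (p + 1) \<le> 0"
    using assms by (intro divide_nonneg_neg) auto
  then have tail_nonneg: "0 \<le> Z2 * (- (a powr (p + 1)) / (p + 1))"
    using assms by (intro mult_nonneg_nonneg) auto
  have "(\<integral>\<^sup>+ x. ennreal Z1 * indicator {0..a} x + ennreal (Z2 * x powr p) * indicator {a..} x \<partial>lborel)
      = (\<integral>\<^sup>+ x. ennreal Z1 * indicator {0..a} x \<partial>lborel)
        + (\<integral>\<^sup>+ x. ennreal (Z2 * x powr p) * indicator {a..} x \<partial>lborel)"
    by (rule nn_integral_add) auto
  also have "\<dots> = ennreal (Z1 * a) + ennreal (Z2 * (- (a powr (p + 1)) / (p + 1)))"
    using assms by (simp only: tail) (simp add: nn_integral_cmult_indicator ennreal_mult)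
  also have "\<dots> = ennreal (Z1 * a + Z2 * (- (a powr (p + 1)) / (p + 1)))"
    using assms tail_nonneg by (intro ennreal_plus[symmetric]) auto
  finally show ?thesis .
qed

section \<open>Estimates for the kernel\<close>

locale moving_average_kernel =
  fixes g :: "real \<Rightarrow> real" and \<alpha> \<beta> c0 \<delta> :: real and k :: nat
  assumes beta_pos: "0 < \<beta>"
    and delta_pos: "\<delta> > 0"
    and alpha_pos: "\<alpha> > 0"
    and g_neg: "\<And>t. t < 0 \<Longrightarrow> g t = 0"
    and g_asymp: "g \<sim>[at_right 0] (\<lambda>t. c0 * t powr \<alpha>)"
    and g_diff: "\<And>j t. j < k \<Longrightarrow> t > 0 \<Longrightarrow>
                   ((deriv ^^ j) g has_real_derivative (deriv ^^ Suc j) g t) (at t)"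
    and g_cont: "continuous_on {0<..} ((deriv ^^ k) g)"
    and g_k_near0: "\<exists>C. \<forall>t\<in>{0<..<\<delta>}. \<bar>(deriv ^^ k) g t\<bar> \<le> C * t powr (\<alpha> - real k)"
    and gk_int: "set_integrable lborel {\<delta><..} (\<lambda>t. \<bar>(deriv ^^ k) g t\<bar> powr \<beta>)"
    and gk_decr: "\<And>x y. \<delta> < x \<Longrightarrow> x \<le> y \<Longrightarrow> \<bar>(deriv ^^ k) g y\<bar> \<le> \<bar>(deriv ^^ k) g x\<bar>"
    and k_large: "\<alpha> + 1 / \<beta> < real k"
begin

lemma k_ge_1: "k \<ge> 1"
  using k_large alpha_pos beta_pos by (smt (verit) of_nat_0 less_one not_less zero_less_divide_1_iff)

lemma tail_exponent: "(\<alpha> - real k) * \<beta> < -1"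
proof -
  have "1 < (real k - \<alpha>) * \<beta>" using k_large beta_pos by (simp add: field_simps)
  then show ?thesis by (simp add: algebra_simps)
qed

lemma alpha_le_k: "\<alpha> \<le> real k"
  using k_large beta_pos by (smt (verit) zero_less_divide_1_iff)

lemma g_bound_near_zero:
  assumes "R > 0"
  shows "\<exists>C>0. \<forall>t\<in>{0<..R}. \<bar>g t\<bar> \<le> C * t powr \<alpha>"
proof -
  obtain c where "\<forall>\<^sub>F t in at_right 0. norm (g t) \<le> c * norm (c0 * t powr \<alpha>)"
    using asymp_equiv_imp_bigo[OF g_asymp] by (elim landau_o.bigE)
  then have "\<forall>\<^sub>F t in at_right 0. \<bar>g t\<bar> \<le> (c * \<bar>c0\<bar>) * t powr \<alpha>"
    by (simp add: abs_mult mult.assoc)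
  moreover have "isCont g t" if "t > 0" for t
    using g_diff[of 0 t] k_ge_1 that by (auto intro: DERIV_isCont)
  then have "continuous_on {0<..R} g" by (intro continuous_at_imp_continuous_on) auto
  ultimately show ?thesis using assms by (rule eventually_powr_bound_imp_bound_on_Ioc)
qed

lemma deriv_k_bound_near_zero:
  "\<exists>C>0. \<forall>t\<in>{0<..\<delta>}. \<bar>(deriv ^^ k) g t\<bar> \<le> C * t powr (\<alpha> - real k)"
proof -
  obtain C where "\<forall>t\<in>{0<..<\<delta>}. \<bar>(deriv ^^ k) g t\<bar> \<le> C * t powr (\<alpha> - real k)"
    using g_k_near0 by blast
  then have "\<forall>\<^sub>F t in at_right 0. \<bar>(deriv ^^ k) g t\<bar> \<le> C * t powr (\<alpha> - real k)"
    unfolding eventually_at_right_field using delta_pos by auto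
  moreover have "continuous_on {0<..\<delta>} ((deriv ^^ k) g)"
    by (rule continuous_on_subset[OF g_cont]) auto
  ultimately show ?thesis using delta_pos by (rule eventually_powr_bound_imp_bound_on_Ioc)
qed

text \<open>\<open>g 0\<close> is unconstrained, hence the grid points \<open>(i - j) / n\<close> (a null set) are excluded.\<close>
lemma g_in_near_plateau:
  obtains C where "C \<ge> 0"
    "\<And>n i s. k \<le> i \<Longrightarrow> i \<le> n \<Longrightarrow> 0 \<le> real i / real n - s \<Longrightarrow> real i / real n - s \<le> 2 * real k / real n
      \<Longrightarrow> s \<notin> (\<lambda>j. (real i - real j) / real n) ` {0..k} \<Longrightarrow> \<bar>g_in g k i n s\<bar> \<le> C * real n powr (- \<alpha>)"
proof -
  obtain C where C: "C > 0" "\<And>t. t \<in> {0<..2 * real k} \<Longrightarrow> \<bar>g t\<bar> \<le> C * t powr \<alpha>"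
    using g_bound_near_zero[of "2 * real k"] k_ge_1 by auto
  have bound: "\<bar>g_in g k i n s\<bar> \<le> (2^k * C * (2 * real k) powr \<alpha>) * real n powr (- \<alpha>)"
    if "k \<le> i" "i \<le> n" "0 \<le> real i / real n - s" "real i / real n - s \<le> 2 * real k / real n"
      "s \<notin> (\<lambda>j. (real i - real j) / real n) ` {0..k}" for n i s
  proof -
    have "n > 0" using that k_ge_1 by simp
    have "\<bar>g ((real i - real j) / real n - s)\<bar> \<le> C * (2 * real k) powr \<alpha> * real n powr (- \<alpha>)"
      if j: "j \<le> k" for j
    proof -
      define a where "a = (real i - real j) / real n - s"
      have "(real i - real j) / real n \<le> real i / real n"
        using \<open>n > 0\<close> by (simp add: divide_right_mono)
      then have a_le: "a \<le> 2 * real k / real n"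
        using \<open>real i / real n - s \<le> _\<close> by (simp add: a_def)
      have "a \<noteq> 0" using j \<open>s \<notin> _\<close> by (auto simp: a_def)
      show ?thesis
      proof (cases "a < 0")
        case True then show ?thesis using g_neg C by (simp add: a_def)
      next
        case False
        with \<open>a \<noteq> 0\<close> have "a > 0" by simp
        moreover have "real k * 1 \<le> real k * real n" using \<open>n > 0\<close> by (intro mult_left_mono) auto
        then have "2 * real k / real n \<le> 2 * real k" using \<open>n > 0\<close> by (simp add: divide_le_eq)
        ultimately have "\<bar>g a\<bar> \<le> C * a powr \<alpha>" using C a_le by simp
        also have "\<dots> \<le> C * (2 * real k / real n) powr \<alpha>"
          using C \<open>a > 0\<close> a_le alpha_pos by (intro mult_left_mono powr_mono2) auto
        also have "\<dots> = C * (2 * real k) powr \<alpha> * real n powr (- \<alpha>)"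
          using \<open>n > 0\<close> by (simp add: powr_divide powr_minus_divide)
        finally show ?thesis by (simp add: a_def)
      qed
    qed
    then show ?thesis by (drule_tac abs_g_in_le) (simp add: mult.assoc)
  qed
  show ?thesis by (rule that[OF _ bound]) (use C in simp_all)
qed

lemma g_in_near_tail:
  obtains C where "C \<ge> 0"
    "\<And>n i s. k \<le> i \<Longrightarrow> i \<le> n \<Longrightarrow> 2 * real k / real n \<le> real i / real n - s \<Longrightarrow> real i / real n - s \<le> \<delta>
      \<Longrightarrow> \<bar>g_in g k i n s\<bar> \<le> C * real n powr (- real k) * (real i / real n - s) powr (\<alpha> - real k)"
proof -
  obtain C where C: "C > 0" "\<And>t. t \<in> {0<..\<delta>} \<Longrightarrow> \<bar>(deriv ^^ k) g t\<bar> \<le> C * t powr (\<alpha> - real k)"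
    using deriv_k_bound_near_zero by blast
  have bound: "\<bar>g_in g k i n s\<bar> \<le> (C * (1/2) powr (\<alpha> - real k)) * real n powr (- real k)
      * (real i / real n - s) powr (\<alpha> - real k)"
    if "k \<le> i" "i \<le> n" "2 * real k / real n \<le> real i / real n - s" "real i / real n - s \<le> \<delta>"
    for n i s
  proof -
    have "n > 0" using that k_ge_1 by simp
    define x where "x = real i / real n - s"
    have start: "(real i - real k) / real n - s = x - real k / real n"
      by (simp add: x_def diff_divide_distrib)
    have "real k / real n > 0" using \<open>n > 0\<close> k_ge_1 by simp
    moreover have "x \<ge> 2 * (real k / real n)" using that by (simp add: x_def)
    ultimately have half: "x - real k / real n \<ge> x / 2" "x / 2 > 0" by linarith+
    have "\<bar>(deriv ^^ k) g y\<bar> \<le> C * (1/2) powr (\<alpha> - real k) * x powr (\<alpha> - real k)"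
      if "x - real k / real n \<le> y" "y \<le> x" for y
    proof -
      have "\<bar>(deriv ^^ k) g y\<bar> \<le> C * y powr (\<alpha> - real k)"
        using C(2)[of y] that half \<open>real i / real n - s \<le> \<delta>\<close> by (simp add: x_def)
      also have "\<dots> \<le> C * (x / 2) powr (\<alpha> - real k)"
        using C(1) that half alpha_le_k by (intro mult_left_mono powr_mono2') auto
      finally show ?thesis using half by (simp add: powr_divide powr_mult)
    qed
    then have "\<bar>g_in g k i n s\<bar> \<le> real n powr (- real k) * (C * (1/2) powr (\<alpha> - real k) * x powr (\<alpha> - real k))"
      using half by (intro abs_g_in_le_deriv_bound \<open>k \<le> i\<close> \<open>n > 0\<close> g_diff) (auto simp: start x_def)
    then show ?thesis by (simp add: x_def mult_ac)
  qed
  show ?thesis by (rule that[OF _ bound]) (use C in simp_all)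
qed


text \<open>A majorant of \<open>\<bar>g_in g k i n s\<bar> powr \<beta>\<close> as a function of \<open>x = i/n - s\<close>.\<close>
definition near_majorant :: "real \<Rightarrow> real \<Rightarrow> nat \<Rightarrow> real \<Rightarrow> ennreal" where
  "near_majorant Z1 Z2 n x =
     ennreal (Z1 * real n powr (- \<alpha> * \<beta>)) * indicator {0..2 * real k / real n} x
   + ennreal (Z2 * real n powr (- real k * \<beta>) * x powr ((\<alpha> - real k) * \<beta>))
       * indicator {2 * real k / real n..} x"

lemma near_majorant_measurable [measurable]: "near_majorant Z1 Z2 n \<in> borel_measurable borel"
  unfolding near_majorant_def[abs_def] by measurable

lemma nn_integral_near_majorant:
  assumes "Z1 \<ge> 0" "Z2 \<ge> 0" "n > 0"
  shows "(\<integral>\<^sup>+ s. near_majorant Z1 Z2 n (c - s) \<partial>lborel)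
    = ennreal ((Z1 * (2 * real k) + Z2 * (- ((2 * real k) powr ((\<alpha> - real k) * \<beta> + 1))
        / ((\<alpha> - real k) * \<beta> + 1))) * real n powr (- \<alpha> * \<beta> - 1))"
proof -
  define p where "p = (\<alpha> - real k) * \<beta>"
  have plateau: "Z1 * real n powr (- \<alpha> * \<beta>) * (2 * real k / real n)
      = Z1 * (2 * real k) * real n powr (- \<alpha> * \<beta> - 1)"
    using assms by (simp add: powr_diff)
  have tail: "Z2 * real n powr (- real k * \<beta>) * (- ((2 * real k / real n) powr (p + 1)) / (p + 1))
      = Z2 * (- ((2 * real k) powr (p + 1)) / (p + 1)) * real n powr (- \<alpha> * \<beta> - 1)"
  proof -
    have "real n powr (- real k * \<beta>) * (2 * real k / real n) powr (p + 1)
        = (2 * real k) powr (p + 1) * real n powr (- real k * \<beta> - (p + 1))"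
      using assms by (simp add: powr_divide powr_diff)
    also have "- real k * \<beta> - (p + 1) = - \<alpha> * \<beta> - 1" by (simp add: p_def algebra_simps)
    finally show ?thesis by (simp add: field_simps)
  qed
  have "(\<integral>\<^sup>+ s. near_majorant Z1 Z2 n (c - s) \<partial>lborel) = (\<integral>\<^sup>+ x. near_majorant Z1 Z2 n x \<partial>lborel)"
    by (rule nn_integral_lborel_reflect) measurable
  also have "\<dots> = ennreal (Z1 * real n powr (- \<alpha> * \<beta>) * (2 * real k / real n)
      + Z2 * real n powr (- real k * \<beta>) * (- ((2 * real k / real n) powr (p + 1)) / (p + 1)))"
    unfolding near_majorant_def p_def[symmetric] using assms k_ge_1 tail_exponent
    by (intro nn_integral_plateau_powr_tail) (auto simp: p_def)
  finally show ?thesis unfolding plateau tail unfolding p_def by (simp only: distrib_right)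
qed

lemma abs_g_in_powr_le_near_majorant:
  obtains Z1 Z2 where "Z1 \<ge> 0" "Z2 \<ge> 0"
    "\<And>n i s. k \<le> i \<Longrightarrow> i \<le> n \<Longrightarrow> 0 \<le> real i / real n - s \<Longrightarrow> real i / real n - s \<le> \<delta> \<Longrightarrow>
     s \<notin> (\<lambda>j. (real i - real j) / real n) ` {0..k} \<Longrightarrow>
     ennreal (\<bar>g_in g k i n s\<bar> powr \<beta>) \<le> near_majorant Z1 Z2 n (real i / real n - s)"
proof -
  obtain C1 where C1: "C1 \<ge> 0" "\<And>n i s. k \<le> i \<Longrightarrow> i \<le> n \<Longrightarrow> 0 \<le> real i / real n - s \<Longrightarrow>
      real i / real n - s \<le> 2 * real k / real n \<Longrightarrow> s \<notin> (\<lambda>j. (real i - real j) / real n) ` {0..k} \<Longrightarrow>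
      \<bar>g_in g k i n s\<bar> \<le> C1 * real n powr (- \<alpha>)"
    by (fact g_in_near_plateau)
  obtain C2 where C2: "C2 \<ge> 0" "\<And>n i s. k \<le> i \<Longrightarrow> i \<le> n \<Longrightarrow> 2 * real k / real n \<le> real i / real n - s \<Longrightarrow>
      real i / real n - s \<le> \<delta> \<Longrightarrow>
      \<bar>g_in g k i n s\<bar> \<le> C2 * real n powr (- real k) * (real i / real n - s) powr (\<alpha> - real k)"
    by (fact g_in_near_tail)
  show ?thesis
  proof (rule that[of "C1 powr \<beta>" "C2 powr \<beta>"])
    fix n i s assume ki: "k \<le> i" "i \<le> n" and x: "0 \<le> real i / real n - s" "real i / real n - s \<le> \<delta>"
      and grid: "s \<notin> (\<lambda>j. (real i - real j) / real n) ` {0..k}"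
    define x where "x = real i / real n - s"
    show "ennreal (\<bar>g_in g k i n s\<bar> powr \<beta>) \<le> near_majorant (C1 powr \<beta>) (C2 powr \<beta>) n (real i / real n - s)"
    proof (cases "x \<le> 2 * real k / real n")
      case True
      have "\<bar>g_in g k i n s\<bar> \<le> C1 * real n powr (- \<alpha>)"
        using C1(2)[OF ki _ _ grid] True x by (simp add: x_def)
      then have "\<bar>g_in g k i n s\<bar> powr \<beta> \<le> (C1 * real n powr (- \<alpha>)) powr \<beta>"
        using beta_pos by (intro powr_mono2) auto
      also have "\<dots> = C1 powr \<beta> * real n powr (- \<alpha> * \<beta>)"
        using C1(1) by (simp add: powr_mult powr_powr)
      finally have "ennreal (\<bar>g_in g k i n s\<bar> powr \<beta>)
          \<le> ennreal (C1 powr \<beta> * real n powr (- \<alpha> * \<beta>)) * indicator {0..2 * real k / real n} x"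
        using True x by (simp add: x_def ennreal_leI)
      then show ?thesis
        unfolding near_majorant_def x_def[symmetric] by (rule add_increasing2[rotated]) simp
    next
      case False
      have "0 \<le> 2 * real k / real n" by simp
      with False have "x > 0" by linarith
      have "\<bar>g_in g k i n s\<bar> \<le> C2 * real n powr (- real k) * x powr (\<alpha> - real k)"
        using C2(2)[OF ki] False x by (simp add: x_def)
      then have "\<bar>g_in g k i n s\<bar> powr \<beta> \<le> (C2 * real n powr (- real k) * x powr (\<alpha> - real k)) powr \<beta>"
        using beta_pos by (intro powr_mono2) auto
      also have "\<dots> = C2 powr \<beta> * real n powr (- real k * \<beta>) * x powr ((\<alpha> - real k) * \<beta>)"
        using C2(1) \<open>x > 0\<close> by (simp add: powr_mult powr_powr)
      finally have "ennreal (\<bar>g_in g k i n s\<bar> powr \<beta>)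
          \<le> ennreal (C2 powr \<beta> * real n powr (- real k * \<beta>) * x powr ((\<alpha> - real k) * \<beta>))
            * indicator {2 * real k / real n..} x"
        using False by (simp add: ennreal_leI)
      then show ?thesis
        unfolding near_majorant_def x_def[symmetric] by (rule add_increasing[rotated]) simp
    qed
  qed (use C1 C2 in simp_all)
qed

lemma g_in_near_window_le_majorant:
  obtains Z1 Z2 where "Z1 \<ge> 0" "Z2 \<ge> 0"
    "\<And>n i \<epsilon>. k \<le> i \<Longrightarrow> i \<le> n \<Longrightarrow> \<epsilon> \<le> \<delta> \<Longrightarrow>
     AE s in lborel. ennreal (\<bar>g_in g k i n s\<bar> powr \<beta>) * indicator {real i / real n - \<epsilon>..real i / real n} s
        \<le> near_majorant Z1 Z2 n (real i / real n - s)"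
proof -
  obtain Z1 Z2 where Z: "Z1 \<ge> 0" "Z2 \<ge> 0" and pointwise: "\<And>n i s. k \<le> i \<Longrightarrow> i \<le> n \<Longrightarrow>
     0 \<le> real i / real n - s \<Longrightarrow> real i / real n - s \<le> \<delta> \<Longrightarrow> s \<notin> (\<lambda>j. (real i - real j) / real n) ` {0..k} \<Longrightarrow>
     ennreal (\<bar>g_in g k i n s\<bar> powr \<beta>) \<le> near_majorant Z1 Z2 n (real i / real n - s)"
    by (fact abs_g_in_powr_le_near_majorant)
  show ?thesis
  proof (rule that[OF Z])
    fix n i \<epsilon> assume ki: "k \<le> i" "i \<le> n" "\<epsilon> \<le> \<delta>"
    have "finite ((\<lambda>j. (real i - real j) / real n) ` {0..k})" by simp
    from AE_not_in[OF finite_imp_null_set_lborel[OF this]]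
    show "AE s in lborel. ennreal (\<bar>g_in g k i n s\<bar> powr \<beta>) * indicator {real i / real n - \<epsilon>..real i / real n} s
      \<le> near_majorant Z1 Z2 n (real i / real n - s)"
    proof eventually_elim
      case (elim s)
      show ?case
      proof (cases "s \<in> {real i / real n - \<epsilon>..real i / real n}")
        case True
        then show ?thesis using pointwise[OF ki(1,2) _ _ elim] ki(3) by simp
      qed simp
    qed
  qed
qed

lemma near_window_estimate:
  obtains C where "C \<ge> 0"
    "\<And>n i \<epsilon> h L. k \<le> i \<Longrightarrow> i \<le> n \<Longrightarrow> \<epsilon> \<le> \<delta> \<Longrightarrow> 0 \<le> L \<Longrightarrow>
     (\<And>s. s \<in> {real i / real n - \<epsilon>..real i / real n} \<Longrightarrow> \<bar>h s\<bar> \<le> L) \<Longrightarrow>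
     (\<integral>\<^sup>+ s. ennreal (\<bar>g_in g k i n s * h s\<bar> powr \<beta>)
        * indicator {real i / real n - \<epsilon>..real i / real n} s \<partial>lborel)
     \<le> ennreal (L powr \<beta> * C * real n powr (- \<alpha> * \<beta> - 1))"
proof -
  obtain Z1 Z2 where Z: "Z1 \<ge> 0" "Z2 \<ge> 0" and le_majorant: "\<And>n i \<epsilon>. k \<le> i \<Longrightarrow> i \<le> n \<Longrightarrow> \<epsilon> \<le> \<delta> \<Longrightarrow>
      AE s in lborel. ennreal (\<bar>g_in g k i n s\<bar> powr \<beta>) * indicator {real i / real n - \<epsilon>..real i / real n} s
        \<le> near_majorant Z1 Z2 n (real i / real n - s)"
    by (fact g_in_near_window_le_majorant)
  define C where "C = Z1 * (2 * real k) + Z2 * (- ((2 * real k) powr ((\<alpha> - real k) * \<beta> + 1))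
        / ((\<alpha> - real k) * \<beta> + 1))"
  have "(2 * real k) powr ((\<alpha> - real k) * \<beta> + 1) / ((\<alpha> - real k) * \<beta> + 1) \<le> 0"
    using tail_exponent by (intro divide_nonneg_neg) auto
  then have "C \<ge> 0" unfolding C_def using Z by (intro add_nonneg_nonneg mult_nonneg_nonneg) auto
  moreover have "(\<integral>\<^sup>+ s. ennreal (\<bar>g_in g k i n s * h s\<bar> powr \<beta>)
        * indicator {real i / real n - \<epsilon>..real i / real n} s \<partial>lborel)
     \<le> ennreal (L powr \<beta> * C * real n powr (- \<alpha> * \<beta> - 1))"
    if "k \<le> i" "i \<le> n" "\<epsilon> \<le> \<delta>" "0 \<le> L" and h: "\<And>s. s \<in> {real i / real n - \<epsilon>..real i / real n} \<Longrightarrow> \<bar>h s\<bar> \<le> L"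
    for n i \<epsilon> h L
  proof -
    let ?A = "{real i / real n - \<epsilon>..real i / real n}"
    have "n > 0" using that k_ge_1 by simp
    have "AE s in lborel. ennreal (\<bar>g_in g k i n s * h s\<bar> powr \<beta>) * indicator ?A s
        \<le> ennreal (L powr \<beta>) * near_majorant Z1 Z2 n (real i / real n - s)"
      using le_majorant[OF that(1-3)]
    proof eventually_elim
      case (elim s)
      show ?case
      proof (cases "s \<in> ?A")
        case True
        then have "\<bar>h s\<bar> powr \<beta> \<le> L powr \<beta>" using h beta_pos by (intro powr_mono2) auto
        have "\<bar>g_in g k i n s * h s\<bar> powr \<beta> = \<bar>h s\<bar> powr \<beta> * \<bar>g_in g k i n s\<bar> powr \<beta>"
          by (simp add: abs_mult powr_mult mult.commute)
        also have "\<dots> \<le> L powr \<beta> * \<bar>g_in g k i n s\<bar> powr \<beta>"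
          by (rule mult_right_mono) (use \<open>\<bar>h s\<bar> powr \<beta> \<le> L powr \<beta>\<close> in auto)
        finally have "ennreal (\<bar>g_in g k i n s * h s\<bar> powr \<beta>)
            \<le> ennreal (L powr \<beta> * \<bar>g_in g k i n s\<bar> powr \<beta>)"
          by (rule ennreal_leI)
        also have "\<dots> = ennreal (L powr \<beta>) * ennreal (\<bar>g_in g k i n s\<bar> powr \<beta>)"
          by (rule ennreal_mult) simp_all
        also have "\<dots> \<le> ennreal (L powr \<beta>) * near_majorant Z1 Z2 n (real i / real n - s)"
          using elim True by (intro mult_left_mono) auto
        finally show ?thesis using True by simp
      qed simp
    qed
    then have "(\<integral>\<^sup>+ s. ennreal (\<bar>g_in g k i n s * h s\<bar> powr \<beta>) * indicator ?A s \<partial>lborel)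
        \<le> (\<integral>\<^sup>+ s. ennreal (L powr \<beta>) * near_majorant Z1 Z2 n (real i / real n - s) \<partial>lborel)"
      by (rule nn_integral_mono_AE)
    also have "\<dots> = ennreal (L powr \<beta>) * (\<integral>\<^sup>+ s. near_majorant Z1 Z2 n (real i / real n - s) \<partial>lborel)"
      by (rule nn_integral_cmult) measurable
    also have "\<dots> = ennreal (L powr \<beta>) * ennreal (C * real n powr (- \<alpha> * \<beta> - 1))"
      using Z \<open>n > 0\<close> by (simp add: nn_integral_near_majorant C_def)
    also have "\<dots> = ennreal (L powr \<beta> * (C * real n powr (- \<alpha> * \<beta> - 1)))"
      by (rule ennreal_mult[symmetric]) (use \<open>C \<ge> 0\<close> in simp_all)
    finally show ?thesis by (simp only: mult.assoc)
  qed
  ultimately show ?thesis by (rule that)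
qed


lemma g_bounded_on_Iic:
  assumes "R > 0"
  obtains M where "M \<ge> 0" "\<And>t. t \<le> R \<Longrightarrow> \<bar>g t\<bar> \<le> M"
proof -
  obtain C where C: "C > 0" "\<And>t. t \<in> {0<..R} \<Longrightarrow> \<bar>g t\<bar> \<le> C * t powr \<alpha>"
    using g_bound_near_zero[OF assms] by blast
  have "\<bar>g t\<bar> \<le> C * R powr \<alpha> + \<bar>g 0\<bar>" if "t \<le> R" for t
  proof (cases t "0 :: real" rule: linorder_cases)
    case greater
    then have "\<bar>g t\<bar> \<le> C * t powr \<alpha>" using C that by simp
    also have "\<dots> \<le> C * R powr \<alpha>" using C greater that alpha_pos by (intro mult_left_mono powr_mono2) auto
    finally show ?thesis by simp
  qed (use g_neg C in auto)
  moreover have "C * R powr \<alpha> + \<bar>g 0\<bar> \<ge> 0" using C by simp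
  ultimately show ?thesis by (rule that[rotated])
qed

lemma abs_g_in_le_reflected_deriv:
  assumes "k \<le> i" "i \<le> n" "s < - \<delta>"
  shows "\<bar>g_in g k i n s\<bar> \<le> real n powr (- real k) * \<bar>(deriv ^^ k) g (- s)\<bar>"
proof -
  have "n > 0" using assms k_ge_1 by simp
  then have start: "- s \<le> (real i - real k) / real n - s" using assms by simp
  show ?thesis
  proof (rule abs_g_in_le_deriv_bound[OF assms(1) \<open>n > 0\<close> g_diff])
    show "(real i - real k) / real n - s > 0" using start assms delta_pos by linarith
    fix y assume "(real i - real k) / real n - s \<le> y"
    then show "\<bar>(deriv ^^ k) g y\<bar> \<le> \<bar>(deriv ^^ k) g (- s)\<bar>"
      using start assms by (intro gk_decr) linarith+
  qed
qed

lemma abs_g_in_le_sup_deriv: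
  assumes ki: "k \<le> i" "i \<le> n" and "0 < \<epsilon>" "real k / real n \<le> \<epsilon> / 2" "s \<le> real i / real n - \<epsilon>"
    and bound: "\<And>y. \<epsilon> / 2 \<le> y \<Longrightarrow> y \<le> real i / real n - s \<Longrightarrow> \<bar>(deriv ^^ k) g y\<bar> \<le> Mk"
  shows "\<bar>g_in g k i n s\<bar> \<le> real n powr (- real k) * Mk"
proof -
  have "n > 0" using ki k_ge_1 by simp
  have "(real i - real k) / real n - s = (real i / real n - s) - real k / real n"
    by (simp add: diff_divide_distrib)
  then have start: "\<epsilon> / 2 \<le> (real i - real k) / real n - s"
    using assms by linarith
  show ?thesis
  proof (rule abs_g_in_le_deriv_bound[OF ki(1) \<open>n > 0\<close> g_diff])
    show "(real i - real k) / real n - s > 0" using start \<open>0 < \<epsilon>\<close> by linarith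
    fix y assume "(real i - real k) / real n - s \<le> y" "y \<le> real i / real n - s"
    then show "\<bar>(deriv ^^ k) g y\<bar> \<le> Mk" using start by (intro bound) linarith+
  qed
qed

text \<open>Away from \<open>i / n\<close> the mean value bound applies once \<open>k / n \<le> \<epsilon> / 2\<close>; for the finitely many
  smaller \<open>n\<close> the factor \<open>n\<^sup>-\<^sup>k\<close> is bounded below and a bound on \<open>g\<close> suffices.\<close>
lemma g_in_mid_bound:
  assumes "\<epsilon> > 0"
  obtains B where "B \<ge> 0"
    "\<And>n i s. k \<le> i \<Longrightarrow> i \<le> n \<Longrightarrow> - \<delta> \<le> s \<Longrightarrow> s \<le> real i / real n - \<epsilon>
      \<Longrightarrow> \<bar>g_in g k i n s\<bar> \<le> B * real n powr (- real k)"
proof -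
  have "{\<epsilon>/2..1 + \<delta>} \<subseteq> {0<..}" using assms by auto
  from continuous_on_compact_bound[OF compact_Icc continuous_on_subset[OF g_cont this]]
  obtain Mk where Mk: "Mk \<ge> 0" "\<And>y. y \<in> {\<epsilon>/2..1 + \<delta>} \<Longrightarrow> \<bar>(deriv ^^ k) g y\<bar> \<le> Mk"
    by auto
  obtain M where M: "M \<ge> 0" "\<And>t. t \<le> 1 + \<delta> \<Longrightarrow> \<bar>g t\<bar> \<le> M"
    using g_bounded_on_Iic[of "1 + \<delta>"] delta_pos by auto
  define N where "N = nat \<lceil>2 * real k / \<epsilon>\<rceil> + 1"
  define B where "B = Mk + 2^k * M * real N ^ k"
  have "\<bar>g_in g k i n s\<bar> \<le> B * real n powr (- real k)"
    if ki: "k \<le> i" "i \<le> n" and s: "- \<delta> \<le> s" "s \<le> real i / real n - \<epsilon>" for n i s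
  proof -
    have "n > 0" using ki k_ge_1 by simp
    have "real i / real n \<le> 1" using ki \<open>n > 0\<close> by simp
    show ?thesis
    proof (cases "n \<ge> N")
      case True
      then have "2 * real k / \<epsilon> \<le> real n" unfolding N_def by linarith
      then have "real k / real n \<le> \<epsilon> / 2" using assms \<open>n > 0\<close> by (simp add: field_simps)
      then have "\<bar>g_in g k i n s\<bar> \<le> real n powr (- real k) * Mk"
        using s \<open>real i / real n \<le> 1\<close> assms by (intro abs_g_in_le_sup_deriv ki Mk(2)) simp_all
      also have "\<dots> \<le> real n powr (- real k) * B"
        using M by (intro mult_left_mono) (auto simp: B_def)
      finally show ?thesis by (simp only: mult.commute)
    next
      case False
      have "\<bar>g_in g k i n s\<bar> \<le> 2^k * M"
      proof (rule abs_g_in_le)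
        fix j
        have "(real i - real j) / real n \<le> real i / real n"
          using \<open>n > 0\<close> by (simp add: divide_right_mono)
        then show "\<bar>g ((real i - real j) / real n - s)\<bar> \<le> M"
          using s \<open>real i / real n \<le> 1\<close> by (intro M(2)) auto
      qed
      moreover have "1 \<le> real N ^ k * real n powr (- real k)"
      proof -
        have "1 \<le> real N / real n" using False \<open>n > 0\<close> by simp
        then have "1 \<le> (real N / real n) ^ k" by (rule one_le_power)
        also have "\<dots> = real N ^ k * real n powr (- real k)"
          using \<open>n > 0\<close> by (simp add: power_divide powr_minus_divide powr_realpow)
        finally show ?thesis .
      qed
      then have "2^k * M \<le> 2^k * M * (real N ^ k * real n powr (- real k))"
        using M(1) mult_left_mono[of 1 _ "2^k * M"] by simp
      ultimately have "\<bar>g_in g k i n s\<bar> \<le> 2^k * M * real N ^ k * real n powr (- real k)"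
        unfolding mult.assoc[of "2^k * M"] by (rule order_trans)
      moreover have "0 \<le> Mk * real n powr (- real k)" using Mk by simp
      ultimately show ?thesis unfolding B_def distrib_right by linarith
    qed
  qed
  moreover have "B \<ge> 0" using Mk M by (simp add: B_def)
  ultimately show ?thesis by (rule that[rotated])
qed

lemma reflected_deriv_k_measurable:
  "(\<lambda>s. indicator {..-\<delta>} s * (deriv ^^ k) g (- s)) \<in> borel_measurable borel"
proof -
  have "(\<lambda>t. indicator {0<..} t *\<^sub>R (deriv ^^ k) g t) \<in> borel_measurable borel"
    by (rule borel_measurable_continuous_on_indicator) (auto intro: g_cont)
  then have "(\<lambda>s. indicator {0<..} (- s) * (deriv ^^ k) g (- s)) \<in> borel_measurable borel"
    by (simp add: measurable_compose[OF borel_measurable_uminus[OF measurable_ident_sets[OF refl]]])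
  then have "(\<lambda>s. indicator {..-\<delta>} s * (indicator {0<..} (- s) * (deriv ^^ k) g (- s)))
      \<in> borel_measurable borel"
    by measurable
  also have "(\<lambda>s. indicator {..-\<delta>} s * (indicator {0<..} (- s) * (deriv ^^ k) g (- s)))
      = (\<lambda>s. indicator {..-\<delta>} s * (deriv ^^ k) g (- s))"
    using delta_pos by (auto simp: indicator_def)
  finally show ?thesis .
qed

lemma tail_integral_finite:
  "(\<integral>\<^sup>+ s. ennreal (\<bar>(deriv ^^ k) g (- s)\<bar> powr \<beta>) * indicator {..-\<delta>} s \<partial>lborel) < \<infinity>"
proof -
  let ?F = "\<lambda>t. ennreal (\<bar>(deriv ^^ k) g t\<bar> powr \<beta>) * indicator {\<delta><..} t"
  have F_meas: "?F \<in> borel_measurable borel"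
    using borel_measurable_integrable[OF gk_int[unfolded set_integrable_def]]
    by (simp add: indicator_mult_ennreal mult.commute)
  have "AE s in lborel. s \<noteq> - \<delta>" by (simp add: AE_lborel_singleton)
  then have "(\<integral>\<^sup>+ s. ennreal (\<bar>(deriv ^^ k) g (- s)\<bar> powr \<beta>) * indicator {..-\<delta>} s \<partial>lborel)
      = (\<integral>\<^sup>+ s. ?F (0 - s) \<partial>lborel)"
    by (intro nn_integral_cong_AE) (auto elim!: eventually_mono simp: indicator_def)
  also have "\<dots> = (\<integral>\<^sup>+ t. ?F t \<partial>lborel)"
    using F_meas by (rule nn_integral_lborel_reflect)
  also have "\<dots> < \<infinity>"
    using gk_int unfolding set_integrable_def
    by (simp add: integrable_iff_bounded indicator_mult_ennreal mult.commute)
  finally show ?thesis .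
qed


lemma g_in_far_window_pointwise:
  assumes ki: "k \<le> i" "i \<le> n" and "0 < \<epsilon>" "B \<ge> 0"
    and B: "\<And>s. - \<delta> \<le> s \<Longrightarrow> s \<le> real i / real n - \<epsilon> \<Longrightarrow> \<bar>g_in g k i n s\<bar> \<le> B * real n powr (- real k)"
    and h: "\<And>s. - \<delta> \<le> s \<Longrightarrow> \<bar>h s\<bar> \<le> L"
  shows "ennreal (\<bar>g_in g k i n s * h s\<bar> powr \<beta>) * indicator {..real i / real n - \<epsilon>} s
    \<le> ennreal (real n powr (- real k * \<beta>))
       * (ennreal (\<bar>(deriv ^^ k) g (- s) * h s\<bar> powr \<beta>) * indicator {..-\<delta>} s
          + ennreal (L powr \<beta> * B powr \<beta>) * indicator {-\<delta>..1} s)"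
    (is "_ \<le> ennreal ?nk * (?tail + ?mid)")
proof -
  have "n > 0" using ki k_ge_1 by simp
  have scale: "(real n powr (- real k) * y) powr \<beta> = ?nk * y powr \<beta>" if "y \<ge> 0" for y
    using that by (simp add: powr_mult powr_powr)
  show ?thesis
  proof (cases "s < - \<delta>")
    case True
    have "\<bar>g_in g k i n s * h s\<bar> powr \<beta> = \<bar>g_in g k i n s\<bar> powr \<beta> * \<bar>h s\<bar> powr \<beta>"
      by (simp add: abs_mult powr_mult)
    also have "\<dots> \<le> ?nk * \<bar>(deriv ^^ k) g (- s)\<bar> powr \<beta> * \<bar>h s\<bar> powr \<beta>"
    proof (rule mult_right_mono)
      have "\<bar>g_in g k i n s\<bar> powr \<beta> \<le> (real n powr (- real k) * \<bar>(deriv ^^ k) g (- s)\<bar>) powr \<beta>"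
        using abs_g_in_le_reflected_deriv[OF ki True] beta_pos by (intro powr_mono2) auto
      then show "\<bar>g_in g k i n s\<bar> powr \<beta> \<le> ?nk * \<bar>(deriv ^^ k) g (- s)\<bar> powr \<beta>"
        by (simp only: scale abs_ge_zero)
    qed simp
    also have "\<dots> = ?nk * \<bar>(deriv ^^ k) g (- s) * h s\<bar> powr \<beta>"
      by (simp add: abs_mult powr_mult)
    finally have "ennreal (\<bar>g_in g k i n s * h s\<bar> powr \<beta>) \<le> ennreal (?nk * \<bar>(deriv ^^ k) g (- s) * h s\<bar> powr \<beta>)"
      by (rule ennreal_leI)
    also have "\<dots> = ennreal ?nk * ?tail"
      using True by (simp add: ennreal_mult)
    also have "\<dots> \<le> ennreal ?nk * (?tail + ?mid)" by (intro mult_left_mono) auto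
    finally show ?thesis by (simp add: indicator_def)
  next
    case False
    show ?thesis
    proof (cases "s \<le> real i / real n - \<epsilon>")
      case True
      have "real i / real n \<le> 1" using ki \<open>n > 0\<close> by simp
      then have "s \<le> 1" using True \<open>0 < \<epsilon>\<close> by linarith
      have "\<bar>g_in g k i n s\<bar> powr \<beta> \<le> (B * real n powr (- real k)) powr \<beta>"
        using B[OF _ True] False beta_pos by (intro powr_mono2) auto
      also have "\<dots> = ?nk * B powr \<beta>" using scale[OF \<open>B \<ge> 0\<close>] by (simp add: mult.commute)
      finally have "\<bar>g_in g k i n s\<bar> powr \<beta> \<le> ?nk * B powr \<beta>" .
      moreover have "\<bar>h s\<bar> powr \<beta> \<le> L powr \<beta>" using h[of s] False beta_pos by (intro powr_mono2) auto
      ultimately have "\<bar>g_in g k i n s\<bar> powr \<beta> * \<bar>h s\<bar> powr \<beta> \<le> ?nk * B powr \<beta> * L powr \<beta>"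
        by (intro mult_mono) auto
      then have "ennreal (\<bar>g_in g k i n s * h s\<bar> powr \<beta>) \<le> ennreal (?nk * (L powr \<beta> * B powr \<beta>))"
        by (intro ennreal_leI) (simp add: abs_mult powr_mult mult_ac)
      also have "\<dots> = ennreal ?nk * ?mid"
        using False \<open>s \<le> 1\<close> by (simp add: ennreal_mult)
      also have "\<dots> \<le> ennreal ?nk * (?tail + ?mid)" by (intro mult_left_mono) auto
      finally show ?thesis using True by simp
    qed simp
  qed
qed

lemma far_window_estimate:
  assumes "0 < \<epsilon>"
  obtains B where
    "\<And>n i h L. k \<le> i \<Longrightarrow> i \<le> n \<Longrightarrow> h \<in> borel_measurable borel \<Longrightarrow>
     (\<And>s. - \<delta> \<le> s \<Longrightarrow> \<bar>h s\<bar> \<le> L) \<Longrightarrow>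
     (\<integral>\<^sup>+ s. ennreal (\<bar>g_in g k i n s * h s\<bar> powr \<beta>) * indicator {..real i / real n - \<epsilon>} s \<partial>lborel)
     \<le> ennreal (real n powr (- real k * \<beta>))
        * ((\<integral>\<^sup>+ s. ennreal (\<bar>(deriv ^^ k) g (- s) * h s\<bar> powr \<beta>) * indicator {..-\<delta>} s \<partial>lborel)
           + ennreal (L powr \<beta> * B))"
proof -
  obtain B where B: "B \<ge> 0" "\<And>n i s. k \<le> i \<Longrightarrow> i \<le> n \<Longrightarrow> - \<delta> \<le> s \<Longrightarrow> s \<le> real i / real n - \<epsilon>
      \<Longrightarrow> \<bar>g_in g k i n s\<bar> \<le> B * real n powr (- real k)"
    by (fact g_in_mid_bound[OF assms])
  have "(\<integral>\<^sup>+ s. ennreal (\<bar>g_in g k i n s * h s\<bar> powr \<beta>) * indicator {..real i / real n - \<epsilon>} s \<partial>lborel)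
     \<le> ennreal (real n powr (- real k * \<beta>))
        * ((\<integral>\<^sup>+ s. ennreal (\<bar>(deriv ^^ k) g (- s) * h s\<bar> powr \<beta>) * indicator {..-\<delta>} s \<partial>lborel)
           + ennreal (L powr \<beta> * (B powr \<beta> * (1 + \<delta>))))"
    if ki: "k \<le> i" "i \<le> n" and h_meas: "h \<in> borel_measurable borel"
      and h: "\<And>s. - \<delta> \<le> s \<Longrightarrow> \<bar>h s\<bar> \<le> L" for n i h L
  proof -
    define tail where "tail s = ennreal (\<bar>(deriv ^^ k) g (- s) * h s\<bar> powr \<beta>) * indicator {..-\<delta>} s" for s
    define mid where "mid s = ennreal (L powr \<beta> * B powr \<beta>) * indicator {-\<delta>..1} s" for s
    have "tail \<in> borel_measurable lborel"
    proof -
      note [measurable] = reflected_deriv_k_measurable h_meas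
      have "tail = (\<lambda>s. ennreal (\<bar>indicator {..-\<delta>} s * (deriv ^^ k) g (- s) * h s\<bar> powr \<beta>)
          * indicator {..-\<delta>} s)"
        by (auto simp: tail_def indicator_def fun_eq_iff)
      also have "\<dots> \<in> borel_measurable lborel" by measurable
      finally show ?thesis .
    qed
    have "(\<integral>\<^sup>+ s. ennreal (\<bar>g_in g k i n s * h s\<bar> powr \<beta>) * indicator {..real i / real n - \<epsilon>} s \<partial>lborel)
        \<le> (\<integral>\<^sup>+ s. ennreal (real n powr (- real k * \<beta>)) * (tail s + mid s) \<partial>lborel)"
      unfolding tail_def mid_def
      by (intro nn_integral_mono g_in_far_window_pointwise[OF ki assms B(1)] B(2)[OF ki] h)
    also have "\<dots> = ennreal (real n powr (- real k * \<beta>))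
        * ((\<integral>\<^sup>+ s. tail s \<partial>lborel) + (\<integral>\<^sup>+ s. mid s \<partial>lborel))"
      using \<open>tail \<in> borel_measurable lborel\<close> by (simp add: nn_integral_cmult nn_integral_add mid_def)
    also have "(\<integral>\<^sup>+ s. mid s \<partial>lborel) = ennreal (L powr \<beta> * B powr \<beta>) * ennreal (1 + \<delta>)"
      unfolding mid_def using delta_pos by (subst nn_integral_cmult_indicator) auto
    also have "\<dots> = ennreal (L powr \<beta> * (B powr \<beta> * (1 + \<delta>)))"
      using delta_pos by (subst ennreal_mult[symmetric]) (auto simp: mult.assoc)
    finally show ?thesis by (simp only: tail_def)
  qed
  then show ?thesis by (rule that)
qed

end

section \<open>Moment bounds\<close>

lemma (in prob_space) nn_integral_le_const:
  assumes "\<And>\<omega>. \<omega> \<in> space M \<Longrightarrow> f \<omega> \<le> c"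
  shows "(\<integral>\<^sup>+ \<omega>. f \<omega> \<partial>M) \<le> c"
proof -
  have "(\<integral>\<^sup>+ \<omega>. f \<omega> \<partial>M) \<le> (\<integral>\<^sup>+ \<omega>. c \<partial>M)" by (intro nn_integral_mono assms)
  also have "\<dots> = c" by (simp add: emeasure_space_1)
  finally show ?thesis .
qed

locale moving_average_model = moving_average_kernel +
  fixes M :: "'w measure" and \<sigma> :: "real \<Rightarrow> 'w \<Rightarrow> real"
  assumes prob: "prob_space M"
    and sigma_meas: "\<And>t. \<sigma> t \<in> borel_measurable M"
    and sigma_cadlag: "\<And>\<omega>. \<omega> \<in> space M \<Longrightarrow> cadlag (\<lambda>t. \<sigma> t \<omega>)"
    and sigma_bdd: "\<exists>K. \<forall>t\<ge>-\<delta>. \<forall>\<omega>\<in>space M. \<bar>\<sigma> t \<omega>\<bar> \<le> K"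
    and moment: "(\<integral>\<^sup>+ \<omega>. (\<integral>\<^sup>+ s. ennreal (\<bar>(deriv ^^ k) g (- s) * \<sigma> s \<omega>\<bar> powr \<beta>)
                    * indicator {..-\<delta>} s \<partial>lborel) \<partial>M) < \<infinity>"
begin

lemma sigma_bound:
  obtains K where "K \<ge> 0" "\<And>t \<omega>. - \<delta> \<le> t \<Longrightarrow> \<omega> \<in> space M \<Longrightarrow> \<bar>\<sigma> t \<omega>\<bar> \<le> K"
proof -
  from sigma_bdd obtain K where "\<forall>t\<ge>-\<delta>. \<forall>\<omega>\<in>space M. \<bar>\<sigma> t \<omega>\<bar> \<le> K" by blast
  then show ?thesis by (intro that[of "max K 0"]) (auto simp: le_max_iff_disj)
qed

lemma near_estimate:
  assumes "0 < \<epsilon>" "\<epsilon> \<le> \<delta>"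
  obtains C where "C \<ge> 0"
    "\<And>n i. k \<le> i \<Longrightarrow> i \<le> n \<Longrightarrow>
       (\<integral>\<^sup>+ \<omega>. (\<integral>\<^sup>+ s. ennreal (\<bar>g_in g k i n s * left_lim (\<lambda>u. \<sigma> u \<omega>) s\<bar> powr \<beta>)
                 * indicator {real i / real n - \<epsilon> .. real i / real n} s \<partial>lborel) \<partial>M)
       + (\<integral>\<^sup>+ s. ennreal (\<bar>g_in g k i n s\<bar> powr \<beta>)
                 * indicator {real i / real n - \<epsilon> .. real i / real n} s \<partial>lborel)
       \<le> ennreal (C * real n powr (- \<alpha> * \<beta> - 1))"
proof -
  obtain C where C: "C \<ge> 0" "\<And>n i \<epsilon> h L. k \<le> i \<Longrightarrow> i \<le> n \<Longrightarrow> \<epsilon> \<le> \<delta> \<Longrightarrow> 0 \<le> L \<Longrightarrow>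
     (\<And>s. s \<in> {real i / real n - \<epsilon>..real i / real n} \<Longrightarrow> \<bar>h s\<bar> \<le> L) \<Longrightarrow>
     (\<integral>\<^sup>+ s. ennreal (\<bar>g_in g k i n s * h s\<bar> powr \<beta>)
        * indicator {real i / real n - \<epsilon>..real i / real n} s \<partial>lborel)
     \<le> ennreal (L powr \<beta> * C * real n powr (- \<alpha> * \<beta> - 1))"
    by (fact near_window_estimate)
  obtain K where K: "K \<ge> 0" "\<And>t \<omega>. - \<delta> \<le> t \<Longrightarrow> \<omega> \<in> space M \<Longrightarrow> \<bar>\<sigma> t \<omega>\<bar> \<le> K"
    by (fact sigma_bound)
  have "(\<integral>\<^sup>+ \<omega>. (\<integral>\<^sup>+ s. ennreal (\<bar>g_in g k i n s * left_lim (\<lambda>u. \<sigma> u \<omega>) s\<bar> powr \<beta>)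
                 * indicator {real i / real n - \<epsilon> .. real i / real n} s \<partial>lborel) \<partial>M)
       + (\<integral>\<^sup>+ s. ennreal (\<bar>g_in g k i n s\<bar> powr \<beta>)
                 * indicator {real i / real n - \<epsilon> .. real i / real n} s \<partial>lborel)
       \<le> ennreal ((K powr \<beta> + 1) * C * real n powr (- \<alpha> * \<beta> - 1))"
    if ki: "k \<le> i" "i \<le> n" for n i
  proof -
    have "real i / real n > 0" using ki k_ge_1 by simp
    have "(\<integral>\<^sup>+ s. ennreal (\<bar>g_in g k i n s * left_lim (\<lambda>u. \<sigma> u \<omega>) s\<bar> powr \<beta>)
        * indicator {real i / real n - \<epsilon> .. real i / real n} s \<partial>lborel)
      \<le> ennreal (K powr \<beta> * C * real n powr (- \<alpha> * \<beta> - 1))" if "\<omega> \<in> space M" for \<omega>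
    proof (rule C(2)[OF ki \<open>\<epsilon> \<le> \<delta>\<close> K(1)])
      fix s assume "s \<in> {real i / real n - \<epsilon>..real i / real n}"
      then have "- \<delta> < s" using \<open>real i / real n > 0\<close> \<open>\<epsilon> \<le> \<delta>\<close> by auto
      then show "\<bar>left_lim (\<lambda>u. \<sigma> u \<omega>) s\<bar> \<le> K"
        using K(2) that by (intro cadlag_abs_left_lim_le[OF sigma_cadlag[OF that]])
    qed
    then have stochastic: "(\<integral>\<^sup>+ \<omega>. (\<integral>\<^sup>+ s. ennreal (\<bar>g_in g k i n s * left_lim (\<lambda>u. \<sigma> u \<omega>) s\<bar> powr \<beta>)
        * indicator {real i / real n - \<epsilon> .. real i / real n} s \<partial>lborel) \<partial>M)
      \<le> ennreal (K powr \<beta> * C * real n powr (- \<alpha> * \<beta> - 1))"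
      by (rule prob_space.nn_integral_le_const[OF prob])
    have deterministic: "(\<integral>\<^sup>+ s. ennreal (\<bar>g_in g k i n s\<bar> powr \<beta>)
        * indicator {real i / real n - \<epsilon> .. real i / real n} s \<partial>lborel)
      \<le> ennreal (C * real n powr (- \<alpha> * \<beta> - 1))"
      using C(2)[OF ki \<open>\<epsilon> \<le> \<delta>\<close>, of 1 "\<lambda>_. 1"] by simp
    have "ennreal (K powr \<beta> * C * real n powr (- \<alpha> * \<beta> - 1)) + ennreal (C * real n powr (- \<alpha> * \<beta> - 1))
        = ennreal ((K powr \<beta> + 1) * C * real n powr (- \<alpha> * \<beta> - 1))"
      using C(1) by (simp add: ennreal_plus[symmetric] algebra_simps del: ennreal_plus)
    with add_mono[OF stochastic deterministic] show ?thesis by simp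
  qed
  moreover have "(K powr \<beta> + 1) * C \<ge> 0" using C(1) by simp
  ultimately show ?thesis by (rule that[rotated])
qed

lemma tail_moment_measurable:
  "(\<lambda>\<omega>. \<integral>\<^sup>+ s. ennreal (\<bar>(deriv ^^ k) g (- s) * \<sigma> s \<omega>\<bar> powr \<beta>) * indicator {..-\<delta>} s \<partial>lborel)
    \<in> borel_measurable M"
proof -
  define E where "E s = indicator {..-\<delta>} s * (deriv ^^ k) g (- s)" for s
  define F where "F \<omega> s = ennreal (\<bar>E s * \<sigma> s \<omega>\<bar> powr \<beta>) * indicator {..-\<delta>} s" for \<omega> s
  have E_meas: "(\<lambda>x. E (snd x)) \<in> borel_measurable (M \<Otimes>\<^sub>M lborel)"
    using measurable_compose[OF measurable_snd reflected_deriv_k_measurable[folded measurable_lborel2]]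
    by (simp add: E_def[abs_def])
  have ind_meas: "(\<lambda>x. indicator {..-\<delta>} (snd x) :: ennreal) \<in> borel_measurable (M \<Otimes>\<^sub>M lborel)"
    by (rule measurable_compose[OF measurable_snd borel_measurable_indicator]) simp
  have "(\<lambda>x. F (fst x) (snd x)) \<in> borel_measurable (M \<Otimes>\<^sub>M lborel)"
    unfolding F_def
    by (intro borel_measurable_times_ennreal measurable_compose[OF _ measurable_ennreal]
        measurable_abs_powr borel_measurable_times E_meas ind_meas
        cadlag_process_measurable[OF sigma_meas sigma_cadlag])
  then have "(\<lambda>\<omega>. \<integral>\<^sup>+ s. F \<omega> s \<partial>lborel) \<in> borel_measurable M"
    using lborel.borel_measurable_nn_integral[of F M] by (simp add: split_beta')
  moreover have "F \<omega> s = ennreal (\<bar>(deriv ^^ k) g (- s) * \<sigma> s \<omega>\<bar> powr \<beta>) * indicator {..-\<delta>} s" for \<omega> s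
    by (simp add: F_def E_def indicator_def)
  ultimately show ?thesis by simp
qed

lemma far_stochastic_estimate:
  assumes "0 < \<epsilon>"
  obtains B where "\<And>n i. k \<le> i \<Longrightarrow> i \<le> n \<Longrightarrow>
     (\<integral>\<^sup>+ \<omega>. (\<integral>\<^sup>+ s. ennreal (\<bar>g_in g k i n s * left_lim (\<lambda>u. \<sigma> u \<omega>) s\<bar> powr \<beta>)
        * indicator {.. real i / real n - \<epsilon>} s \<partial>lborel) \<partial>M)
     \<le> ennreal (real n powr (- real k * \<beta>)) * ((\<integral>\<^sup>+ \<omega>. (\<integral>\<^sup>+ s. ennreal (\<bar>(deriv ^^ k) g (- s) * \<sigma> s \<omega>\<bar> powr \<beta>) * indicator {..-\<delta>} s \<partial>lborel) \<partial>M) + ennreal B)"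
proof -
  obtain B where B: "\<And>n i h L. k \<le> i \<Longrightarrow> i \<le> n \<Longrightarrow> h \<in> borel_measurable borel \<Longrightarrow>
     (\<And>s. - \<delta> \<le> s \<Longrightarrow> \<bar>h s\<bar> \<le> L) \<Longrightarrow>
     (\<integral>\<^sup>+ s. ennreal (\<bar>g_in g k i n s * h s\<bar> powr \<beta>) * indicator {..real i / real n - \<epsilon>} s \<partial>lborel)
     \<le> ennreal (real n powr (- real k * \<beta>))
        * ((\<integral>\<^sup>+ s. ennreal (\<bar>(deriv ^^ k) g (- s) * h s\<bar> powr \<beta>) * indicator {..-\<delta>} s \<partial>lborel)
           + ennreal (L powr \<beta> * B))"
    by (fact far_window_estimate[OF assms])
  obtain K where K: "K \<ge> 0" "\<And>t \<omega>. - \<delta> \<le> t \<Longrightarrow> \<omega> \<in> space M \<Longrightarrow> \<bar>\<sigma> t \<omega>\<bar> \<le> K"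
    by (fact sigma_bound)
  define X where "X \<omega> = (\<integral>\<^sup>+ s. ennreal (\<bar>(deriv ^^ k) g (- s) * \<sigma> s \<omega>\<bar> powr \<beta>)
      * indicator {..-\<delta>} s \<partial>lborel)" for \<omega>
  have X_meas: "X \<in> borel_measurable M"
    using tail_moment_measurable by (simp add: X_def[abs_def])
  have "(\<integral>\<^sup>+ \<omega>. (\<integral>\<^sup>+ s. ennreal (\<bar>g_in g k i n s * left_lim (\<lambda>u. \<sigma> u \<omega>) s\<bar> powr \<beta>)
        * indicator {.. real i / real n - \<epsilon>} s \<partial>lborel) \<partial>M)
     \<le> ennreal (real n powr (- real k * \<beta>)) * ((\<integral>\<^sup>+ \<omega>. X \<omega> \<partial>M) + ennreal (K powr \<beta> * B))"
    if ki: "k \<le> i" "i \<le> n" for n i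
  proof -
    let ?nk = "ennreal (real n powr (- real k * \<beta>))"
    have "(\<integral>\<^sup>+ s. ennreal (\<bar>g_in g k i n s * left_lim (\<lambda>u. \<sigma> u \<omega>) s\<bar> powr \<beta>)
        * indicator {.. real i / real n - \<epsilon>} s \<partial>lborel)
      \<le> ?nk * (X \<omega> + ennreal (K powr \<beta> * B))" if \<omega>: "\<omega> \<in> space M" for \<omega>
    proof -
      have "(\<integral>\<^sup>+ s. ennreal (\<bar>g_in g k i n s * left_lim (\<lambda>u. \<sigma> u \<omega>) s\<bar> powr \<beta>)
          * indicator {.. real i / real n - \<epsilon>} s \<partial>lborel)
        = (\<integral>\<^sup>+ s. ennreal (\<bar>g_in g k i n s * \<sigma> s \<omega>\<bar> powr \<beta>)
          * indicator {.. real i / real n - \<epsilon>} s \<partial>lborel)"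
        by (rule nn_integral_cong_AE) (use AE_left_lim_eq[OF sigma_cadlag[OF \<omega>]] in \<open>eventually_elim, simp\<close>)
      also have "\<dots> \<le> ?nk * (X \<omega> + ennreal (K powr \<beta> * B))"
        unfolding X_def
      proof (rule B[OF ki])
        show "(\<lambda>s. \<sigma> s \<omega>) \<in> borel_measurable borel"
          using measurable_Pair2[OF cadlag_process_measurable[OF sigma_meas sigma_cadlag] \<omega>] by simp
      qed (use K(2) \<omega> in auto)
      finally show ?thesis .
    qed
    then have "(\<integral>\<^sup>+ \<omega>. (\<integral>\<^sup>+ s. ennreal (\<bar>g_in g k i n s * left_lim (\<lambda>u. \<sigma> u \<omega>) s\<bar> powr \<beta>)
          * indicator {.. real i / real n - \<epsilon>} s \<partial>lborel) \<partial>M)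
      \<le> (\<integral>\<^sup>+ \<omega>. ?nk * (X \<omega> + ennreal (K powr \<beta> * B)) \<partial>M)"
      by (rule nn_integral_mono)
    also have "\<dots> = ?nk * (\<integral>\<^sup>+ \<omega>. X \<omega> + ennreal (K powr \<beta> * B) \<partial>M)"
      by (rule nn_integral_cmult) (use X_meas in measurable)
    also have "(\<integral>\<^sup>+ \<omega>. X \<omega> + ennreal (K powr \<beta> * B) \<partial>M) = (\<integral>\<^sup>+ \<omega>. X \<omega> \<partial>M) + ennreal (K powr \<beta> * B)"
      using X_meas by (simp add: nn_integral_add prob_space.emeasure_space_1[OF prob])
    finally show ?thesis .
  qed
  then show ?thesis unfolding X_def by (rule that)
qed

lemma far_estimate:
  assumes "0 < \<epsilon>"
  obtains C where "C \<ge> 0"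
    "\<And>n i. k \<le> i \<Longrightarrow> i \<le> n \<Longrightarrow>
       (\<integral>\<^sup>+ \<omega>. (\<integral>\<^sup>+ s. ennreal (\<bar>g_in g k i n s * left_lim (\<lambda>u. \<sigma> u \<omega>) s\<bar> powr \<beta>)
                 * indicator {.. real i / real n - \<epsilon>} s \<partial>lborel) \<partial>M)
       + (\<integral>\<^sup>+ s. ennreal (\<bar>g_in g k i n s\<bar> powr \<beta>)
                 * indicator {.. real i / real n - \<epsilon>} s \<partial>lborel)
       \<le> ennreal (C * real n powr (- real k * \<beta>))"
proof -
  obtain B1 where B1: "\<And>n i. k \<le> i \<Longrightarrow> i \<le> n \<Longrightarrow>
     (\<integral>\<^sup>+ \<omega>. (\<integral>\<^sup>+ s. ennreal (\<bar>g_in g k i n s * left_lim (\<lambda>u. \<sigma> u \<omega>) s\<bar> powr \<beta>)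
        * indicator {.. real i / real n - \<epsilon>} s \<partial>lborel) \<partial>M)
     \<le> ennreal (real n powr (- real k * \<beta>)) * ((\<integral>\<^sup>+ \<omega>. (\<integral>\<^sup>+ s. ennreal (\<bar>(deriv ^^ k) g (- s) * \<sigma> s \<omega>\<bar> powr \<beta>) * indicator {..-\<delta>} s \<partial>lborel) \<partial>M) + ennreal B1)"
    by (fact far_stochastic_estimate[OF assms])
  obtain B2 where B2: "\<And>n i h L. k \<le> i \<Longrightarrow> i \<le> n \<Longrightarrow> h \<in> borel_measurable borel \<Longrightarrow>
     (\<And>s. - \<delta> \<le> s \<Longrightarrow> \<bar>h s\<bar> \<le> L) \<Longrightarrow>
     (\<integral>\<^sup>+ s. ennreal (\<bar>g_in g k i n s * h s\<bar> powr \<beta>) * indicator {..real i / real n - \<epsilon>} s \<partial>lborel)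
     \<le> ennreal (real n powr (- real k * \<beta>))
        * ((\<integral>\<^sup>+ s. ennreal (\<bar>(deriv ^^ k) g (- s) * h s\<bar> powr \<beta>) * indicator {..-\<delta>} s \<partial>lborel)
           + ennreal (L powr \<beta> * B2))"
    by (fact far_window_estimate[OF assms])
  define J where "J = (\<integral>\<^sup>+ s. ennreal (\<bar>(deriv ^^ k) g (- s)\<bar> powr \<beta>) * indicator {..-\<delta>} s \<partial>lborel)"
  define T where "T = (\<integral>\<^sup>+ \<omega>. (\<integral>\<^sup>+ s. ennreal (\<bar>(deriv ^^ k) g (- s) * \<sigma> s \<omega>\<bar> powr \<beta>) * indicator {..-\<delta>} s \<partial>lborel) \<partial>M) + ennreal B1 + (J + ennreal B2)"
  have "T < \<infinity>"
    using moment tail_integral_finite by (simp add: T_def J_def)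
  then obtain C where C: "C \<ge> 0" "T = ennreal C" by (cases T) auto
  have "(\<integral>\<^sup>+ \<omega>. (\<integral>\<^sup>+ s. ennreal (\<bar>g_in g k i n s * left_lim (\<lambda>u. \<sigma> u \<omega>) s\<bar> powr \<beta>)
                 * indicator {.. real i / real n - \<epsilon>} s \<partial>lborel) \<partial>M)
       + (\<integral>\<^sup>+ s. ennreal (\<bar>g_in g k i n s\<bar> powr \<beta>)
                 * indicator {.. real i / real n - \<epsilon>} s \<partial>lborel)
       \<le> ennreal (C * real n powr (- real k * \<beta>))"
    if ki: "k \<le> i" "i \<le> n" for n i
  proof -
    let ?nk = "ennreal (real n powr (- real k * \<beta>))"
    have deterministic: "(\<integral>\<^sup>+ s. ennreal (\<bar>g_in g k i n s\<bar> powr \<beta>)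
          * indicator {.. real i / real n - \<epsilon>} s \<partial>lborel) \<le> ?nk * (J + ennreal B2)"
      using B2[OF ki, of "\<lambda>_. 1" 1] by (simp add: J_def)
    have "?nk * ((\<integral>\<^sup>+ \<omega>. (\<integral>\<^sup>+ s. ennreal (\<bar>(deriv ^^ k) g (- s) * \<sigma> s \<omega>\<bar> powr \<beta>) * indicator {..-\<delta>} s \<partial>lborel) \<partial>M) + ennreal B1) + ?nk * (J + ennreal B2) = ?nk * T"
      by (simp add: T_def distrib_left)
    also have "\<dots> = ennreal (C * real n powr (- real k * \<beta>))"
      using C by (simp add: ennreal_mult mult.commute)
    finally show ?thesis using add_mono[OF B1[OF ki] deterministic] by simp
  qed
  with C(1) show ?thesis by (rule that)
qed

lemma window_estimates:
  assumes "0 < \<epsilon>" "\<epsilon> \<le> \<delta>"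
  shows "\<exists>C>0. \<forall>n i. k \<le> i \<and> i \<le> n \<longrightarrow>
           ((\<integral>\<^sup>+ \<omega>. (\<integral>\<^sup>+ s. ennreal (\<bar>g_in g k i n s * left_lim (\<lambda>u. \<sigma> u \<omega>) s\<bar> powr \<beta>)
                 * indicator {real i / real n - \<epsilon> .. real i / real n} s \<partial>lborel) \<partial>M)
            + (\<integral>\<^sup>+ s. ennreal (\<bar>g_in g k i n s\<bar> powr \<beta>)
                 * indicator {real i / real n - \<epsilon> .. real i / real n} s \<partial>lborel)
            \<le> ennreal (C * real n powr (- \<alpha> * \<beta> - 1)))
         \<and> ((\<integral>\<^sup>+ \<omega>. (\<integral>\<^sup>+ s. ennreal (\<bar>g_in g k i n s * left_lim (\<lambda>u. \<sigma> u \<omega>) s\<bar> powr \<beta>)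
                 * indicator {.. real i / real n - \<epsilon>} s \<partial>lborel) \<partial>M)
            + (\<integral>\<^sup>+ s. ennreal (\<bar>g_in g k i n s\<bar> powr \<beta>)
                 * indicator {.. real i / real n - \<epsilon>} s \<partial>lborel)
            \<le> ennreal (C * real n powr (- real k * \<beta>)))"
proof -
  obtain C1 where C1: "C1 \<ge> 0" "\<And>n i. k \<le> i \<Longrightarrow> i \<le> n \<Longrightarrow>
       (\<integral>\<^sup>+ \<omega>. (\<integral>\<^sup>+ s. ennreal (\<bar>g_in g k i n s * left_lim (\<lambda>u. \<sigma> u \<omega>) s\<bar> powr \<beta>)
                 * indicator {real i / real n - \<epsilon> .. real i / real n} s \<partial>lborel) \<partial>M)
       + (\<integral>\<^sup>+ s. ennreal (\<bar>g_in g k i n s\<bar> powr \<beta>)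
                 * indicator {real i / real n - \<epsilon> .. real i / real n} s \<partial>lborel)
       \<le> ennreal (C1 * real n powr (- \<alpha> * \<beta> - 1))"
    by (fact near_estimate[OF assms])
  obtain C2 where C2: "C2 \<ge> 0" "\<And>n i. k \<le> i \<Longrightarrow> i \<le> n \<Longrightarrow>
       (\<integral>\<^sup>+ \<omega>. (\<integral>\<^sup>+ s. ennreal (\<bar>g_in g k i n s * left_lim (\<lambda>u. \<sigma> u \<omega>) s\<bar> powr \<beta>)
                 * indicator {.. real i / real n - \<epsilon>} s \<partial>lborel) \<partial>M)
       + (\<integral>\<^sup>+ s. ennreal (\<bar>g_in g k i n s\<bar> powr \<beta>)
                 * indicator {.. real i / real n - \<epsilon>} s \<partial>lborel)
       \<le> ennreal (C2 * real n powr (- real k * \<beta>))"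
    by (fact far_estimate[OF assms(1)])
  have enlarge: "a \<le> ennreal (c * x) \<Longrightarrow> c \<le> C1 + C2 + 1 \<Longrightarrow> a \<le> ennreal ((C1 + C2 + 1) * x)"
    if "x \<ge> 0" for a c x
    using that by (auto intro: order_trans ennreal_leI mult_right_mono)
  show ?thesis
    by (intro exI[of _ "C1 + C2 + 1"] conjI allI impI) (use C1 C2 in \<open>auto intro!: enlarge\<close>)
qed

end

theorem lemma4p10:
  fixes M :: "'w measure" and \<sigma> :: "real \<Rightarrow> 'w \<Rightarrow> real" and g :: "real \<Rightarrow> real"
    and \<alpha> \<beta> c0 \<delta> :: real and k :: nat
  assumes M: "prob_space M"
    and beta: "0 < \<beta>" "\<beta> < 2"
    and sigma_meas: "\<And>t. \<sigma> t \<in> borel_measurable M"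
    and sigma_cadlag: "\<And>\<omega>. \<omega> \<in> space M \<Longrightarrow> cadlag (\<lambda>t. \<sigma> t \<omega>)"
    and sigma_bdd: "\<exists>K. \<forall>t\<ge>-\<delta>. \<forall>\<omega>\<in>space M. \<bar>\<sigma> t \<omega>\<bar> \<le> K"
    and delta: "\<delta> > 0"
    and alpha: "\<alpha> > 0" and c0: "c0 \<noteq> 0"
    and g_neg: "\<And>t. t < 0 \<Longrightarrow> g t = 0"
    and g_asymp: "g \<sim>[at_right 0] (\<lambda>t. c0 * t powr \<alpha>)"
    and g_diff: "\<And>j t. j < k \<Longrightarrow> t > 0 \<Longrightarrow>
                   ((deriv ^^ j) g has_real_derivative (deriv ^^ Suc j) g t) (at t)"
    and g_cont: "continuous_on {0<..} ((deriv ^^ k) g)"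
    and g_k_near0: "\<exists>C. \<forall>t\<in>{0<..<\<delta>}. \<bar>(deriv ^^ k) g t\<bar> \<le> C * t powr (\<alpha> - real k)"
    and g1_int: "set_integrable lborel {\<delta><..} (\<lambda>t. \<bar>deriv g t\<bar> powr \<beta>)"
    and gk_int: "set_integrable lborel {\<delta><..} (\<lambda>t. \<bar>(deriv ^^ k) g t\<bar> powr \<beta>)"
    and g1_decr: "\<And>x y. \<delta> < x \<Longrightarrow> x \<le> y \<Longrightarrow> \<bar>deriv g y\<bar> \<le> \<bar>deriv g x\<bar>"
    and gk_decr: "\<And>x y. \<delta> < x \<Longrightarrow> x \<le> y \<Longrightarrow> \<bar>(deriv ^^ k) g y\<bar> \<le> \<bar>(deriv ^^ k) g x\<bar>"
    and moment: "(\<integral>\<^sup>+ \<omega>. (\<integral>\<^sup>+ s. ennreal (\<bar>(deriv ^^ k) g (- s) * \<sigma> s \<omega>\<bar> powr \<beta>)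
                    * indicator {..-\<delta>} s \<partial>lborel) \<partial>M) < \<infinity>"
    and k_large: "\<alpha> + 1 / \<beta> < real k"
  shows "\<forall>\<epsilon>. 0 < \<epsilon> \<and> \<epsilon> \<le> \<delta> \<longrightarrow> (\<exists>C>0. \<forall>n i. k \<le> i \<and> i \<le> n \<longrightarrow>
           ((\<integral>\<^sup>+ \<omega>. (\<integral>\<^sup>+ s. ennreal (\<bar>g_in g k i n s * left_lim (\<lambda>u. \<sigma> u \<omega>) s\<bar> powr \<beta>)
                 * indicator {real i / real n - \<epsilon> .. real i / real n} s \<partial>lborel) \<partial>M)
            + (\<integral>\<^sup>+ s. ennreal (\<bar>g_in g k i n s\<bar> powr \<beta>)
                 * indicator {real i / real n - \<epsilon> .. real i / real n} s \<partial>lborel)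
            \<le> ennreal (C * real n powr (- \<alpha> * \<beta> - 1)))
         \<and> ((\<integral>\<^sup>+ \<omega>. (\<integral>\<^sup>+ s. ennreal (\<bar>g_in g k i n s * left_lim (\<lambda>u. \<sigma> u \<omega>) s\<bar> powr \<beta>)
                 * indicator {.. real i / real n - \<epsilon>} s \<partial>lborel) \<partial>M)
            + (\<integral>\<^sup>+ s. ennreal (\<bar>g_in g k i n s\<bar> powr \<beta>)
                 * indicator {.. real i / real n - \<epsilon>} s \<partial>lborel)
            \<le> ennreal (C * real n powr (- real k * \<beta>))))"
proof -
  interpret moving_average_model g \<alpha> \<beta> c0 \<delta> k M \<sigma>
    by (rule moving_average_model.intro[OF moving_average_kernel.intro moving_average_model_axioms.intro]) (fact assms)+
  show ?thesis by (intro allI impI window_estimates) simp_all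
qed

end
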